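(* Let $(A,\Delta)$ be an algebraic quantum hypergroup. If $A$ has an identity $1$, then $\Delta(1)=1\otimes1$.
   Context: **Standing definitions.** All algebras are over $\mathbb C$, associative, possibly without identity, with non-degenerate product. $M(A)$ denotes the multiplier algebra and $\iota$ the identity map. *Comultiplication.* A regular comultiplication is a linear map $\Delta:A\to M(A\otimes A)$, not assumed multiplicative, such that: - $\Delta(a)(1\otimes b)$, $(a\otimes1)\Delta(b)$, $\Delta(a)(b\otimes1)$ and $(1\otimes a)\Delta(b)$ lie in $A\otimes A$; - $(a\otimes1\otimes1)(\Delta\otimes\iota)(\Delta(b)(1\otimes c))=(\iota\otimes\Delta)((a\otimes1)\Delta(b))(1\otimes1\otimes c)$. *Counit.* A counit is a homomorphism $\varepsilon:A\to\mathbb C$ with $(\varepsilon\otimes\iota)\Delta=\iota=(\iota\otimes\varepsilon)\Delta$. *Integrals.* A left integral is a nonzero $\varphi$ with $(\iota\otimes\varphi)\Delta(a)=\varphi(a)1$ in $M(A)$. A functional is faithful if $f(ab)=0\ \forall b$ or $f(ba)=0\ \forall b$ forces $a=0$. *Antipode.* An antipode relative to a faithful left integral $\varphi$ is a bijective linear anti-homomorphism $S:A\to A$ with $S((\iota\otimes\varphi)(\Delta(a)(1\otimes b)))=(\iota\otimes\varphi)((1\otimes a)\Delta(b))$ for all $a,b$. *Algebraic quantum hypergroup.* A pair $(A,\Delta)$ with $\Delta$ a regular comultiplication admitting a counit, a faithful left integral $\varphi$ and an antipode relative to $\varphi$. *)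

theory Defs
  imports Complex_Main
begin

class cvec = ab_group_add +
  fixes scaleC :: "complex \<Rightarrow> 'a \<Rightarrow> 'a" (infixr "*\<^sub>C" 75)
  assumes scaleC_add_right: "c *\<^sub>C (x + y) = c *\<^sub>C x + c *\<^sub>C y"
    and scaleC_add_left: "(c + d) *\<^sub>C x = c *\<^sub>C x + d *\<^sub>C x"
    and scaleC_scaleC: "c *\<^sub>C (d *\<^sub>C x) = (c * d) *\<^sub>C x"
    and scaleC_one: "1 *\<^sub>C x = x"

instantiation complex :: cvec
begin
definition scaleC_complex :: "complex \<Rightarrow> complex \<Rightarrow> complex" where
  "scaleC_complex c x = c * x"
instance by standard (auto simp: scaleC_complex_def algebra_simps)
end

class calg = cvec + ring +
  assumes scaleC_mult_left: "c *\<^sub>C (x * y) = (c *\<^sub>C x) * y"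
    and scaleC_mult_right: "c *\<^sub>C (x * y) = x * (c *\<^sub>C y)"

definition clinear :: "('a::cvec \<Rightarrow> 'b::cvec) \<Rightarrow> bool" where
  "clinear f \<longleftrightarrow> (\<forall>x y. f (x + y) = f x + f y) \<and> (\<forall>c x. f (c *\<^sub>C x) = c *\<^sub>C f x)"

definition cbilinear :: "('a::cvec \<Rightarrow> 'b::cvec \<Rightarrow> complex) \<Rightarrow> bool" where
  "cbilinear \<beta> \<longleftrightarrow> (\<forall>b. clinear (\<lambda>a. \<beta> a b)) \<and> (\<forall>a. clinear (\<lambda>b. \<beta> a b))"

definition nondegenerate_product :: "'a::calg itself \<Rightarrow> bool" where
  "nondegenerate_product _ \<longleftrightarrow>
     (\<forall>a::'a. (\<forall>b. a * b = 0) \<longrightarrow> a = 0) \<and> (\<forall>a::'a. (\<forall>b. b * a = 0) \<longrightarrow> a = 0)"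

text \<open>Formal finite sums of elementary tensors, identified when no bilinear functional
  separates them (this is the usual algebraic tensor product, realised inside the dual
  of the space of bilinear forms).\<close>

definition tev :: "('a \<Rightarrow> 'b \<Rightarrow> complex) \<Rightarrow> (('a \<times> 'b) \<times> complex) list \<Rightarrow> complex" where
  "tev \<beta> xs = (\<Sum>((a, b), c) \<leftarrow> xs. c * \<beta> a b)"

definition tens_eq :: "(('a::cvec \<times> 'b::cvec) \<times> complex) list \<Rightarrow> (('a \<times> 'b) \<times> complex) list \<Rightarrow> bool" where
  "tens_eq xs ys \<longleftrightarrow> (\<forall>\<beta>. cbilinear \<beta> \<longrightarrow> tev \<beta> xs = tev \<beta> ys)"

quotient_type (overloaded) ('a, 'b) tensor = "(('a::cvec \<times> 'b::cvec) \<times> complex) list" / tens_eq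
  by (auto simp: equivp_def tens_eq_def fun_eq_iff)

lemma tev_append[simp]: "tev \<beta> (xs @ ys) = tev \<beta> xs + tev \<beta> ys"
  by (simp add: tev_def)

lemma tev_neg: "tev \<beta> (map (\<lambda>((a, b), c). ((a, b), - c)) xs) = - tev \<beta> xs"
  by (induction xs) (auto simp: tev_def)

lemma tev_scale: "tev \<beta> (map (\<lambda>((a, b), c). ((a, b), d * c)) xs) = d * tev \<beta> xs"
  by (induction xs) (auto simp: tev_def algebra_simps)

instantiation tensor :: (cvec, cvec) cvec
begin
lift_definition zero_tensor :: "('a, 'b) tensor" is "[]" .
lift_definition plus_tensor :: "('a, 'b) tensor \<Rightarrow> ('a, 'b) tensor \<Rightarrow> ('a, 'b) tensor"
  is "(@)" by (auto simp: tens_eq_def)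
lift_definition uminus_tensor :: "('a, 'b) tensor \<Rightarrow> ('a, 'b) tensor"
  is "map (\<lambda>((a, b), c). ((a, b), - c))" by (auto simp: tens_eq_def tev_neg)
lift_definition minus_tensor :: "('a, 'b) tensor \<Rightarrow> ('a, 'b) tensor \<Rightarrow> ('a, 'b) tensor"
  is "\<lambda>xs ys. xs @ map (\<lambda>((a, b), c). ((a, b), - c)) ys" by (auto simp: tens_eq_def tev_neg)
lift_definition scaleC_tensor :: "complex \<Rightarrow> ('a, 'b) tensor \<Rightarrow> ('a, 'b) tensor"
  is "\<lambda>d. map (\<lambda>((a, b), c). ((a, b), d * c))" by (auto simp: tens_eq_def tev_scale)
lemma tev_nil[simp]: "tev \<beta> [] = 0" by (simp add: tev_def)

instance
proof
  fix a b c :: "('a, 'b) tensor" and r s :: complex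
  show "a + b + c = a + (b + c)" by transfer (auto simp: tens_eq_def add.assoc)
  show "a + b = b + a" by transfer (auto simp: tens_eq_def add.commute)
  show "0 + a = a" by transfer (auto simp: tens_eq_def)
  show "- a + a = 0" by transfer (auto simp: tens_eq_def tev_neg)
  show "a - b = a + - b" by transfer (auto simp: tens_eq_def)
  show "r *\<^sub>C (a + b) = r *\<^sub>C a + r *\<^sub>C b" by transfer (auto simp: tens_eq_def tev_scale)
  show "(r + s) *\<^sub>C a = r *\<^sub>C a + s *\<^sub>C a" by transfer (auto simp: tens_eq_def tev_scale[symmetric];
      induct_tac a; auto simp: tev_def algebra_simps)
  show "r *\<^sub>C s *\<^sub>C a = (r * s) *\<^sub>C a" by transfer (auto simp: tens_eq_def;
      induct_tac a; auto simp: tev_def algebra_simps)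
  show "1 *\<^sub>C a = a" by transfer (auto simp: tens_eq_def tev_scale)
qed
end


definition tp :: "'a::cvec \<Rightarrow> 'b::cvec \<Rightarrow> ('a, 'b) tensor" where
  "tp a b = abs_tensor [((a, b), 1)]"

definition tens_prod_list ::
  "(('a::times \<times> 'b::times) \<times> complex) list \<Rightarrow> (('a \<times> 'b) \<times> complex) list \<Rightarrow> (('a \<times> 'b) \<times> complex) list" where
  "tens_prod_list xs ys =
     concat (map (\<lambda>((a, b), c). map (\<lambda>((a', b'), c'). ((a * a', b * b'), c * c')) ys) xs)"

instantiation tensor :: ("{cvec,times}", "{cvec,times}") times
begin
definition times_tensor :: "('a, 'b) tensor \<Rightarrow> ('a, 'b) tensor \<Rightarrow> ('a, 'b) tensor" where
  "x * y = abs_tensor (tens_prod_list (rep_tensor x) (rep_tensor y))"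
instance ..
end

definition tmap :: "('a::cvec \<Rightarrow> 'c::cvec) \<Rightarrow> ('b::cvec \<Rightarrow> 'd::cvec) \<Rightarrow> ('a, 'b) tensor \<Rightarrow> ('c, 'd) tensor" where
  "tmap f g x = abs_tensor (map (\<lambda>((a, b), c). ((f a, g b), c)) (rep_tensor x))"

text \<open>Slice maps \<open>\<iota> \<otimes> \<omega> : A \<otimes> B \<rightarrow> A\<close> and \<open>\<omega> \<otimes> \<iota> : A \<otimes> B \<rightarrow> B\<close> for linear functionals
  \<open>\<omega>\<close> (using \<open>A \<otimes> \<complex> = A\<close>, \<open>\<complex> \<otimes> B = B\<close>).\<close>
definition slice_r :: "('b::cvec \<Rightarrow> complex) \<Rightarrow> ('a::cvec, 'b) tensor \<Rightarrow> 'a" where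
  "slice_r \<omega> x = (\<Sum>((a, b), c) \<leftarrow> rep_tensor x. (c * \<omega> b) *\<^sub>C a)"

definition slice_l :: "('a::cvec \<Rightarrow> complex) \<Rightarrow> ('a, 'b::cvec) tensor \<Rightarrow> 'b" where
  "slice_l \<omega> x = (\<Sum>((a, b), c) \<leftarrow> rep_tensor x. (c * \<omega> a) *\<^sub>C b)"

definition tassoc :: "('a::cvec, ('b::cvec, 'c::cvec) tensor) tensor \<Rightarrow> (('a, 'b) tensor, 'c) tensor" where
  "tassoc x = abs_tensor (concat (map (\<lambda>((a, t), c).
      map (\<lambda>((b, d), c'). ((tp a b, d), c * c')) (rep_tensor t)) (rep_tensor x)))"

text \<open>Since \<open>A\<close> is unital, \<open>M(A) = A\<close> and
  \<open>M(A \<otimes> A) = A \<otimes> A\<close>, \<open>M(A \<otimes> A \<otimes> A) = A \<otimes> A \<otimes> A\<close>, so the comultiplication is a linear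
  map \<open>A \<rightarrow> A \<otimes> A\<close> and the multipliers \<open>1 \<otimes> b\<close> etc. are genuine elements.\<close>

definition is_identity :: "'a::calg \<Rightarrow> bool" where
  "is_identity e \<longleftrightarrow> (\<forall>x. e * x = x \<and> x * e = x)"

definition regular_comultiplication :: "'a::calg \<Rightarrow> ('a \<Rightarrow> ('a, 'a) tensor) \<Rightarrow> bool" where
  "regular_comultiplication e \<Delta> \<longleftrightarrow>
     clinear \<Delta> \<and>
     (\<forall>a b c.
        tp (tp a e) e * tmap \<Delta> id (\<Delta> b * tp e c)
      = tassoc (tmap id \<Delta> (tp a e * \<Delta> b)) * tp (tp e e) c)"

definition is_counit :: "('a::calg \<Rightarrow> ('a, 'a) tensor) \<Rightarrow> ('a \<Rightarrow> complex) \<Rightarrow> bool" where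
  "is_counit \<Delta> \<epsilon> \<longleftrightarrow>
     clinear \<epsilon> \<and> (\<forall>x y. \<epsilon> (x * y) = \<epsilon> x * \<epsilon> y) \<and>
     (\<forall>a. slice_l \<epsilon> (\<Delta> a) = a) \<and> (\<forall>a. slice_r \<epsilon> (\<Delta> a) = a)"

definition left_integral :: "'a::calg \<Rightarrow> ('a \<Rightarrow> ('a, 'a) tensor) \<Rightarrow> ('a \<Rightarrow> complex) \<Rightarrow> bool" where
  "left_integral e \<Delta> \<phi> \<longleftrightarrow>
     clinear \<phi> \<and> \<phi> \<noteq> (\<lambda>_. 0) \<and> (\<forall>a. slice_r \<phi> (\<Delta> a) = \<phi> a *\<^sub>C e)"

definition faithful :: "('a::calg \<Rightarrow> complex) \<Rightarrow> bool" where
  "faithful f \<longleftrightarrow> (\<forall>a. ((\<forall>b. f (a * b) = 0) \<or> (\<forall>b. f (b * a) = 0)) \<longrightarrow> a = 0)"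

definition antipode_rel :: "'a::calg \<Rightarrow> ('a \<Rightarrow> ('a, 'a) tensor) \<Rightarrow> ('a \<Rightarrow> complex) \<Rightarrow> ('a \<Rightarrow> 'a) \<Rightarrow> bool" where
  "antipode_rel e \<Delta> \<phi> S \<longleftrightarrow>
     bij S \<and> clinear S \<and> (\<forall>x y. S (x * y) = S y * S x) \<and>
     (\<forall>a b. S (slice_r \<phi> (\<Delta> a * tp e b)) = slice_r \<phi> (tp e a * \<Delta> b))"

definition algebraic_quantum_hypergroup :: "'a::calg \<Rightarrow> ('a \<Rightarrow> ('a, 'a) tensor) \<Rightarrow> bool" where
  "algebraic_quantum_hypergroup e \<Delta> \<longleftrightarrow>
     nondegenerate_product TYPE('a) \<and>
     regular_comultiplication e \<Delta> \<and>
     (\<exists>\<epsilon>. is_counit \<Delta> \<epsilon>) \<and>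
     (\<exists>\<phi> S. left_integral e \<Delta> \<phi> \<and> faithful \<phi> \<and> antipode_rel e \<Delta> \<phi> S)"

end

theory Submission
  imports Defs
begin

text \<open>Since the antipode \<open>S\<close> is a bijective anti-homomorphism, \<open>S 1 = 1\<close>.  Taking \<open>a = 1\<close>
  in the defining relation of \<open>S\<close> and using \<open>(1 \<otimes> 1) \<Delta>(b) = \<Delta>(b)\<close> and left invariance of
  \<open>\<phi>\<close> gives \<open>S((\<iota> \<otimes> \<phi>)(\<Delta>(1)(1 \<otimes> b))) = \<phi>(b) 1 = S(\<phi>(b) 1)\<close>, hence
  \<open>(\<iota> \<otimes> \<phi>)(\<Delta>(1)(1 \<otimes> b)) = \<phi>(b) 1\<close> for all \<open>b\<close>.  So \<open>\<Delta>(1)\<close> and \<open>1 \<otimes> 1\<close> agree under all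
  slices \<open>\<omega> \<otimes> \<phi>(\<cdot> b)\<close>, and these slices separate \<open>A \<otimes> A\<close> because \<open>\<phi>\<close> is faithful.\<close>

lemma tev_Cons [simp]: "tev \<beta> (((a, b), c) # xs) = c * \<beta> a b + tev \<beta> xs"
  by (simp add: tev_def)

lemma tev_add_form: "tev (\<lambda>p q. f p q + g p q) xs = tev f xs + tev g xs"
  by (induction xs) (auto simp: algebra_simps)

lemma tev_mult_form: "tev (\<lambda>p q. k * f p q) xs = k * tev f xs"
  by (induction xs) (auto simp: algebra_simps)

lemma tev_map_snd:
  "tev \<beta> (map (\<lambda>((p, q), c). ((p, g p q), c)) xs) = tev (\<lambda>p q. \<beta> p (g p q)) xs"
  by (induction xs) auto

lemma tev_tens_prod_list:
  "tev \<beta> (tens_prod_list xs ys) = tev (\<lambda>p q. tev (\<lambda>p' q'. \<beta> (p * p') (q * q')) ys) xs"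
proof (induction xs)
  case Nil
  then show ?case by (simp add: tens_prod_list_def)
next
  case (Cons x xs)
  obtain a b c where x: "x = ((a, b), c)" by (metis prod.collapse)
  have "tev \<beta> (map (\<lambda>((a', b'), c'). ((a * a', b * b'), c * c')) ys)
      = c * tev (\<lambda>p' q'. \<beta> (a * p') (b * q')) ys"
    by (induction ys) (auto simp: algebra_simps)
  then show ?case using Cons by (simp add: x tens_prod_list_def)
qed

lemma clinear_zero: "clinear f \<Longrightarrow> f 0 = 0"
  unfolding clinear_def by (metis add_cancel_right_right add_0)

lemma clinear_add: "clinear f \<Longrightarrow> f (x + y) = f x + f y"
  unfolding clinear_def by simp

lemma clinear_scale: "clinear f \<Longrightarrow> f (c *\<^sub>C x) = c * f x"
  unfolding clinear_def by (simp add: scaleC_complex_def)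

lemma clinear_comp_mult_right:
  fixes \<phi> :: "'a::calg \<Rightarrow> complex"
  shows "clinear \<phi> \<Longrightarrow> clinear (\<lambda>q. \<phi> (q * b))"
  unfolding clinear_def by (simp add: distrib_right scaleC_mult_left[symmetric])

lemma cbilinear_clinear_left: "cbilinear \<beta> \<Longrightarrow> clinear (\<lambda>p. \<beta> p q)"
  unfolding cbilinear_def by blast

lemma cbilinear_clinear_right: "cbilinear \<beta> \<Longrightarrow> clinear (\<lambda>q. \<beta> p q)"
  unfolding cbilinear_def by blast

lemma cbilinear_zero: "cbilinear (\<lambda>p q. 0)"
  unfolding cbilinear_def clinear_def by (simp add: scaleC_complex_def)

lemma cbilinear_add: "cbilinear f \<Longrightarrow> cbilinear g \<Longrightarrow> cbilinear (\<lambda>p q. f p q + g p q)"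
  unfolding cbilinear_def clinear_def by (simp add: scaleC_complex_def algebra_simps)

lemma cbilinear_mult: "cbilinear f \<Longrightarrow> cbilinear (\<lambda>p q. k * f p q)"
  unfolding cbilinear_def clinear_def by (simp add: scaleC_complex_def algebra_simps)

lemma cbilinear_product_form: "clinear \<omega> \<Longrightarrow> clinear \<psi> \<Longrightarrow> cbilinear (\<lambda>p q. \<omega> p * \<psi> q)"
  unfolding cbilinear_def clinear_def by (simp add: scaleC_complex_def algebra_simps)

lemma cbilinear_comp_mult_left:
  fixes \<beta> :: "'a::calg \<Rightarrow> 'b::calg \<Rightarrow> complex"
  shows "cbilinear \<beta> \<Longrightarrow> cbilinear (\<lambda>p q. \<beta> (a * p) (b * q))"
  unfolding cbilinear_def clinear_def by (simp add: distrib_left scaleC_mult_right[symmetric])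

lemma cbilinear_comp_mult_right:
  fixes \<beta> :: "'a::calg \<Rightarrow> 'b::calg \<Rightarrow> complex"
  shows "cbilinear \<beta> \<Longrightarrow> cbilinear (\<lambda>p q. \<beta> (p * a) (q * b))"
  unfolding cbilinear_def clinear_def by (simp add: distrib_right scaleC_mult_left[symmetric])

lemma cbilinear_tev:
  assumes "\<And>a b. cbilinear (\<lambda>p q. F p q a b)"
  shows "cbilinear (\<lambda>p q. tev (F p q) xs)"
proof (induction xs)
  case Nil
  then show ?case by (simp add: cbilinear_zero)
next
  case (Cons x xs)
  obtain a b c where x: "x = ((a, b), c)" by (metis prod.collapse)
  show ?case using Cons by (simp add: x cbilinear_add cbilinear_mult assms)
qed

lemma tev_rep_abs: "cbilinear \<beta> \<Longrightarrow> tev \<beta> (rep_tensor (abs_tensor xs)) = tev \<beta> xs"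
  using Quotient3_rep_abs[OF Quotient3_tensor, of xs] by (simp add: tens_eq_def)

lemma tev_rep_tp: "cbilinear \<beta> \<Longrightarrow> tev \<beta> (rep_tensor (tp a b)) = \<beta> a b"
  by (simp add: tp_def tev_rep_abs)

lemma tensor_eqI:
  assumes "\<And>\<beta>. cbilinear \<beta> \<Longrightarrow> tev \<beta> (rep_tensor X) = tev \<beta> (rep_tensor Y)"
  shows "X = Y"
  using assms Quotient3_rel_rep[OF Quotient3_tensor, of X Y] by (simp add: tens_eq_def)

lemma tev_rep_times:
  fixes X Y :: "('a::calg, 'b::calg) tensor"
  assumes "cbilinear \<beta>"
  shows "tev \<beta> (rep_tensor (X * Y))
    = tev (\<lambda>p q. tev (\<lambda>p' q'. \<beta> (p * p') (q * q')) (rep_tensor Y)) (rep_tensor X)"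
proof -
  have "cbilinear (\<lambda>p q. tev (\<lambda>p' q'. \<beta> (p * p') (q * q')) (rep_tensor Y))"
    by (rule cbilinear_tev) (rule cbilinear_comp_mult_right[OF assms])
  then show ?thesis
    by (simp add: times_tensor_def tev_rep_abs tev_tens_prod_list assms)
qed

lemma tp_identity_mult:
  fixes X :: "('a::calg, 'a) tensor"
  assumes "is_identity e"
  shows "tp e e * X = X"
proof (rule tensor_eqI)
  fix \<beta> :: "'a \<Rightarrow> 'a \<Rightarrow> complex" assume \<beta>: "cbilinear \<beta>"
  have "cbilinear (\<lambda>p q. tev (\<lambda>p' q'. \<beta> (p * p') (q * q')) (rep_tensor X))"
    by (rule cbilinear_tev) (rule cbilinear_comp_mult_right[OF \<beta>])
  with \<beta> assms show "tev \<beta> (rep_tensor (tp e e * X)) = tev \<beta> (rep_tensor X)"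
    by (simp add: tev_rep_times tev_rep_tp is_identity_def)
qed

lemma tev_rep_times_tp_identity:
  fixes X :: "('a::calg, 'a) tensor"
  assumes "is_identity e" and "cbilinear \<beta>"
  shows "tev \<beta> (rep_tensor (X * tp e b)) = tev (\<lambda>p q. \<beta> p (q * b)) (rep_tensor X)"
proof -
  have "tev (\<lambda>p' q'. \<beta> (p * p') (q * q')) (rep_tensor (tp e b)) = \<beta> p (q * b)" for p q
    using assms by (simp add: tev_rep_tp cbilinear_comp_mult_left is_identity_def)
  then show ?thesis by (simp add: tev_rep_times assms(2))
qed

lemma clinear_slice_r:
  assumes "clinear \<omega>"
  shows "\<omega> (slice_r \<phi> X) = tev (\<lambda>p q. \<omega> p * \<phi> q) (rep_tensor X)"
proof -
  have "\<omega> (\<Sum>((a, b), c) \<leftarrow> xs. (c * \<phi> b) *\<^sub>C a) = tev (\<lambda>p q. \<omega> p * \<phi> q) xs" for xs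
  proof (induction xs)
    case Nil
    then show ?case by (simp add: clinear_zero[OF assms])
  next
    case (Cons x xs)
    obtain a b c where x: "x = ((a, b), c)" by (metis prod.collapse)
    show ?case
      using Cons by (simp add: x clinear_add[OF assms] clinear_scale[OF assms] algebra_simps)
  qed
  then show ?thesis unfolding slice_r_def .
qed

text \<open>One elimination step: if some \<open>\<psi> i\<close> does not vanish on the right leg \<open>r\<close> of the first
  term \<open>a \<otimes> r\<close>, then against every \<open>\<omega>\<close> the left leg \<open>a\<close> is a combination of the other
  left legs, and moving those multiples of \<open>r\<close> onto the other terms absorbs \<open>a \<otimes> r\<close>.\<close>

lemma tens_eq_shorter_if_slices_vanish:
  fixes \<psi> :: "'i \<Rightarrow> 'b::cvec \<Rightarrow> complex" and xs :: "(('a::cvec \<times> 'b) \<times> complex) list"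
  assumes \<psi>_linear: "\<And>i. clinear (\<psi> i)"
    and separating: "\<And>r. \<forall>i. \<psi> i r = 0 \<Longrightarrow> r = 0"
    and vanish: "\<And>\<omega> i. clinear \<omega> \<Longrightarrow> tev (\<lambda>p q. \<omega> p * \<psi> i q) xs = 0"
    and "xs \<noteq> []"
  obtains ys where "length ys < length xs" and "tens_eq xs ys"
proof -
  obtain a q c rest where xs: "xs = ((a, q), c) # rest"
    using \<open>xs \<noteq> []\<close> by (metis list.exhaust prod.collapse)
  define r where "r = c *\<^sub>C q"
  have head: "tev \<beta> xs = \<beta> a r + tev \<beta> rest" if "cbilinear \<beta>" for \<beta> :: "'a \<Rightarrow> 'b \<Rightarrow> complex"
    using clinear_scale[OF cbilinear_clinear_right[OF that]] by (simp add: xs r_def)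
  show ?thesis
  proof (cases "\<forall>i. \<psi> i r = 0")
    case True
    then have "r = 0" by (rule separating)
    have "tens_eq xs rest"
      unfolding tens_eq_def
      using head \<open>r = 0\<close> clinear_zero[OF cbilinear_clinear_right] by auto
    then show ?thesis using that[of rest] by (simp add: xs)
  next
    case False
    then obtain i where "\<psi> i r \<noteq> 0" by blast
    define d where "d = \<psi> i r"
    define rest' where
      "rest' = map (\<lambda>((p, q'), c'). ((p, q' + (- (\<psi> i q' / d)) *\<^sub>C r), c')) rest"
    have "tens_eq xs rest'"
      unfolding tens_eq_def
    proof (intro allI impI)
      fix \<beta> :: "'a \<Rightarrow> 'b \<Rightarrow> complex" assume \<beta>: "cbilinear \<beta>"
      note \<beta>_right = clinear_add[OF cbilinear_clinear_right[OF \<beta>]]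
        clinear_scale[OF cbilinear_clinear_right[OF \<beta>]]
      have shift: "(\<lambda>p q'. \<beta> p (q' + (- (\<psi> i q' / d)) *\<^sub>C r))
          = (\<lambda>p q'. \<beta> p q' + (- (1 / d)) * (\<beta> p r * \<psi> i q'))"
        by (simp add: fun_eq_iff \<beta>_right)
      have "tev \<beta> rest' = tev \<beta> rest + (- (1 / d)) * tev (\<lambda>p q'. \<beta> p r * \<psi> i q') rest"
        unfolding rest'_def tev_map_snd shift tev_add_form tev_mult_form ..
      moreover have "tev (\<lambda>p q'. \<beta> p r * \<psi> i q') rest = - (\<beta> a r * d)"
        using vanish[OF cbilinear_clinear_left[OF \<beta>, of r], of i]
          clinear_scale[OF \<psi>_linear[of i], of c q]
        by (simp add: xs d_def r_def eq_neg_iff_add_eq_0 add.commute mult.left_commute)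
      ultimately show "tev \<beta> xs = tev \<beta> rest'"
        using \<open>\<psi> i r \<noteq> 0\<close> head[OF \<beta>] by (simp add: d_def)
    qed
    then show ?thesis using that[of rest'] by (simp add: xs rest'_def)
  qed
qed

lemma tens_eq_Nil_if_slices_vanish:
  fixes \<psi> :: "'i \<Rightarrow> 'b::cvec \<Rightarrow> complex" and xs :: "(('a::cvec \<times> 'b) \<times> complex) list"
  assumes \<psi>_linear: "\<And>i. clinear (\<psi> i)"
    and separating: "\<And>r. \<forall>i. \<psi> i r = 0 \<Longrightarrow> r = 0"
    and vanish: "\<And>\<omega> i. clinear \<omega> \<Longrightarrow> tev (\<lambda>p q. \<omega> p * \<psi> i q) xs = 0"
  shows "tens_eq xs []"
  using vanish
proof (induction "length xs" arbitrary: xs rule: less_induct)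
  case less
  show ?case
  proof (cases "xs = []")
    case True
    then show ?thesis by (simp add: tens_eq_def)
  next
    case False
    obtain ys where shorter: "length ys < length xs" and "tens_eq xs ys"
      using \<psi>_linear separating less.prems False by (rule tens_eq_shorter_if_slices_vanish)
    moreover have "tev (\<lambda>p q. \<omega> p * \<psi> i q) ys = 0" if "clinear \<omega>" for \<omega> i
      using \<open>tens_eq xs ys\<close> less.prems[OF that] cbilinear_product_form[OF that \<psi>_linear]
      unfolding tens_eq_def by metis
    then have "tens_eq ys []" by (rule less.hyps[OF shorter])
    ultimately show ?thesis by (simp add: tens_eq_def)
  qed
qed

lemma tensor_eq_if_slices_agree:
  fixes \<psi> :: "'i \<Rightarrow> 'b::cvec \<Rightarrow> complex" and X Y :: "('a::cvec, 'b) tensor"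
  assumes \<psi>_linear: "\<And>i. clinear (\<psi> i)"
    and separating: "\<And>r. \<forall>i. \<psi> i r = 0 \<Longrightarrow> r = 0"
    and agree: "\<And>\<omega> i. clinear \<omega> \<Longrightarrow>
      tev (\<lambda>p q. \<omega> p * \<psi> i q) (rep_tensor X) = tev (\<lambda>p q. \<omega> p * \<psi> i q) (rep_tensor Y)"
  shows "X = Y"
proof (rule tensor_eqI)
  let ?xs = "rep_tensor X @ map (\<lambda>((a, b), c). ((a, b), - c)) (rep_tensor Y)"
  have "tens_eq ?xs []"
  proof (rule tens_eq_Nil_if_slices_vanish[OF \<psi>_linear separating])
    fix \<omega> :: "'a \<Rightarrow> complex" and i assume "clinear \<omega>"
    then show "tev (\<lambda>p q. \<omega> p * \<psi> i q) ?xs = 0" by (simp add: tev_neg agree)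
  qed
  then show "tev \<beta> (rep_tensor X) = tev \<beta> (rep_tensor Y)" if "cbilinear \<beta>" for \<beta>
    using that by (simp add: tens_eq_def tev_neg)
qed

lemma surj_antimult_fixes_identity:
  assumes "is_identity e" and "surj S" and antimult: "\<And>x y. S (x * y) = S y * S x"
  shows "S e = e"
proof -
  obtain y where y: "e = S y" using \<open>surj S\<close> by (metis surjD)
  have "S e = S e * S y" using assms(1) y by (simp add: is_identity_def)
  also have "\<dots> = S (y * e)" by (simp add: antimult)
  also have "\<dots> = e" using assms(1) y by (simp add: is_identity_def)
  finally show ?thesis .
qed

lemma antipode_slice_Delta_identity:
  assumes "is_identity e" and "left_integral e \<Delta> \<phi>" and "antipode_rel e \<Delta> \<phi> S"
  shows "slice_r \<phi> (\<Delta> e * tp e b) = \<phi> b *\<^sub>C e"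
proof -
  have "bij S" and "clinear S" and antimult: "\<And>x y. S (x * y) = S y * S x"
    and antipode: "\<And>a b. S (slice_r \<phi> (\<Delta> a * tp e b)) = slice_r \<phi> (tp e a * \<Delta> b)"
    using assms(3) unfolding antipode_rel_def by auto
  have "S e = e"
    using assms(1) bij_is_surj[OF \<open>bij S\<close>] antimult by (rule surj_antimult_fixes_identity)
  have "S (slice_r \<phi> (\<Delta> e * tp e b)) = slice_r \<phi> (\<Delta> b)"
    by (simp add: antipode tp_identity_mult[OF assms(1)])
  also have "\<dots> = \<phi> b *\<^sub>C e"
    using assms(2) by (simp add: left_integral_def)
  also have "\<dots> = S (\<phi> b *\<^sub>C e)"
    using \<open>clinear S\<close> \<open>S e = e\<close> by (simp add: clinear_def)
  finally show ?thesis using bij_is_inj[OF \<open>bij S\<close>] by (simp add: inj_eq)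
qed

theorem lemma1p12:
  fixes \<Delta> :: "'a::calg \<Rightarrow> ('a, 'a) tensor" and e :: 'a
  assumes "algebraic_quantum_hypergroup e \<Delta>"
    and "is_identity e"
  shows "\<Delta> e = tp e e"
proof -
  obtain \<phi> S where integral: "left_integral e \<Delta> \<phi>" and "faithful \<phi>"
    and antipode: "antipode_rel e \<Delta> \<phi> S"
    using assms(1) unfolding algebraic_quantum_hypergroup_def by blast
  have "clinear \<phi>" using integral by (simp add: left_integral_def)
  show ?thesis
  proof (rule tensor_eq_if_slices_agree[where \<psi> = "\<lambda>b q. \<phi> (q * b)"])
    show "clinear (\<lambda>q. \<phi> (q * b))" for b
      using \<open>clinear \<phi>\<close> by (rule clinear_comp_mult_right)
    show "r = 0" if "\<forall>b. \<phi> (r * b) = 0" for r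
      using \<open>faithful \<phi>\<close> that by (simp add: faithful_def)
    fix \<omega> :: "'a \<Rightarrow> complex" and b assume "clinear \<omega>"
    have "tev (\<lambda>p q. \<omega> p * \<phi> (q * b)) (rep_tensor (\<Delta> e)) = \<omega> (slice_r \<phi> (\<Delta> e * tp e b))"
      using assms(2) \<open>clinear \<omega>\<close> \<open>clinear \<phi>\<close>
      by (simp add: clinear_slice_r tev_rep_times_tp_identity cbilinear_product_form)
    also have "\<dots> = \<omega> e * \<phi> (e * b)"
      using antipode_slice_Delta_identity[OF assms(2) integral antipode] assms(2) \<open>clinear \<omega>\<close>
      by (simp add: clinear_scale is_identity_def)
    also have "\<dots> = tev (\<lambda>p q. \<omega> p * \<phi> (q * b)) (rep_tensor (tp e e))"
      using \<open>clinear \<omega>\<close> \<open>clinear \<phi>\<close>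
      by (simp add: tev_rep_tp cbilinear_product_form clinear_comp_mult_right)
    finally show "tev (\<lambda>p q. \<omega> p * \<phi> (q * b)) (rep_tensor (\<Delta> e))
      = tev (\<lambda>p q. \<omega> p * \<phi> (q * b)) (rep_tensor (tp e e))" .
  qed
qed

end
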